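(* The polynomials $S_n(x,q)$ satisfy $$S_{n+1}(x,q)=(q+nx)S_n(x,q)+x(1-2x)\frac{\partial}{\partial x}S_n(x,q)\quad(n\ge0),$$ with $S_0(x,q)=1$. Furthermore, $$\sum_{n\ge0}S_n(x,q)\frac{z^n}{n!}=S(x,z)^q.$$
   Context: Permutations of $[n]=\{1,\dots,n\}$ are written in standard cycle decomposition (each cycle starts with its smallest element, cycles in increasing order of smallest elements). $\pi$ has an excedance at $i$ if $\pi(i)>i$; ${\rm exc}(\pi)$ is the number of excedances, ${\rm cyc}(\pi)$ the number of cycles. A value $x$ is a double excedance of $\pi$ if $\pi^{-1}(x)<x<\pi(x)$. A permutation $\pi$ of $[n]$ is a simsun permutation of the second kind if for every $k\in\{0,1,\dots,n\}$, deleting the $k$ largest letters from the cycle decomposition of $\pi$ yields a permutation with no double excedances; $\mathcal{SS}_n$ is the set of these, and $S_n(x,q)=\sum_{\pi\in\mathcal{SS}_n}x^{{\rm exc}(\pi)}q^{{\rm cyc}(\pi)}$. In one-line notation, ${\rm des}(\pi)=\#\{i\in[n-1]:\pi(i)>\pi(i+1)\}$, a double descent is an index $i$ with $\pi(i)>\pi(i+1)>\pi(i+2)$, and $\pi$ is (first-kind) simsun if for every $k\in[n]$ the subword of letters in $[k]$ has no double descents; with $\mathcal{RS}_n$ their set, $S_n(x)=\sum_{\pi\in\mathcal{RS}_n}x^{{\rm des}(\pi)}$, $S_0(x)=1$, and $S(x,z)=\sum_{n\ge0}S_n(x)\frac{z^n}{n!}$. *)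

theory Defs
  imports "HOL-Computational_Algebra.Computational_Algebra" "HOL-Combinatorics.Permutations"
begin

text \<open>Permutation of [m] obtained from p (a permutation of [n], m \<le> n) by deleting
  the letters greater than m from its cycle decomposition: each i \<le> m is sent to
  the first element \<le> m that follows it along its cycle.\<close>
definition del_large :: "(nat \<Rightarrow> nat) \<Rightarrow> nat \<Rightarrow> nat \<Rightarrow> nat" where
  "del_large p m i = (p ^^ (LEAST j. j > 0 \<and> (p ^^ j) i \<le> m)) i"

definition no_double_exc :: "nat \<Rightarrow> (nat \<Rightarrow> nat) \<Rightarrow> bool" where
  "no_double_exc m sigma \<longleftrightarrow>
     \<not> (\<exists>x\<in>{1..m}. \<exists>y\<in>{1..m}. sigma y = x \<and> y < x \<and> x < sigma x)"

definition simsun2 :: "nat \<Rightarrow> (nat \<Rightarrow> nat) \<Rightarrow> bool" where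
  "simsun2 n p \<longleftrightarrow> (\<forall>k\<in>{0..n}. no_double_exc (n - k) (del_large p (n - k)))"

definition SS :: "nat \<Rightarrow> (nat \<Rightarrow> nat) set" where
  "SS n = {p. p permutes {1..n} \<and> simsun2 n p}"

definition exc :: "nat \<Rightarrow> (nat \<Rightarrow> nat) \<Rightarrow> nat" where
  "exc n p = card {i\<in>{1..n}. p i > i}"

definition cyc :: "nat \<Rightarrow> (nat \<Rightarrow> nat) \<Rightarrow> nat" where
  "cyc n p = card ((\<lambda>i. {(p ^^ k) i | k. True}) ` {1..n})"

text \<open>S_n(x,q) as a polynomial in q whose coefficients are polynomials in x.\<close>
definition S2 :: "nat \<Rightarrow> real poly poly" where
  "S2 n = (\<Sum>p\<in>SS n. monom (monom 1 (exc n p)) (cyc n p))"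

definition oneline :: "nat \<Rightarrow> (nat \<Rightarrow> nat) \<Rightarrow> nat list" where
  "oneline n p = map p [1..<n+1]"

definition has_double_descent :: "nat list \<Rightarrow> bool" where
  "has_double_descent w \<longleftrightarrow> (\<exists>i. i + 2 < length w \<and> w ! i > w ! (i+1) \<and> w ! (i+1) > w ! (i+2))"

definition RS :: "nat \<Rightarrow> (nat \<Rightarrow> nat) set" where
  "RS n = {p. p permutes {1..n} \<and>
     (\<forall>k\<in>{1..n}. \<not> has_double_descent (filter (\<lambda>v. v \<le> k) (oneline n p)))}"

definition des :: "nat \<Rightarrow> (nat \<Rightarrow> nat) \<Rightarrow> nat" where
  "des n p = card {i\<in>{1..n-1}. p i > p (i+1)}"

definition S1 :: "nat \<Rightarrow> real poly" where
  "S1 n = (\<Sum>p\<in>RS n. monom 1 (des n p))"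

text \<open>S(x,z) for a fixed real x, as a formal power series in z.\<close>
definition S_egf :: "real \<Rightarrow> real fps" where
  "S_egf x = Abs_fps (\<lambda>n. poly (S1 n) x / fact n)"

text \<open>Formal power (1 + (F - 1))^q, for F with constant term 1.\<close>
definition fps_pow_real :: "real fps \<Rightarrow> real \<Rightarrow> real fps" where
  "fps_pow_real F q = fps_binomial q oo (F - 1)"

end

(*
  Both recurrences come from inserting the largest letter.  Every simsun permutation of the
  second kind of [n+1] arises exactly once by inserting n+1 into the cycle decomposition of one
  \<pi> of [n], either as a new fixed point (one more cycle) or right after a letter c with
  \<pi>\<^sup>-\<^sup>1(c) \<ge> c.  There are n - exc \<pi> such letters; the exc \<pi> excedances among them keep the
  number of excedances and the other n - 2 exc \<pi> add one.  Since x(1-2x) d/dx x\<^sup>e = e x\<^sup>e - 2e x\<^sup>e\<^sup>+\<^sup>1,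
  this is the recurrence S\<^sub>n\<^sub>+\<^sub>1 = (q + nx) S\<^sub>n + x(1-2x) \<partial>\<^sub>x S\<^sub>n.  Inserting n+1 into the one-line
  notation of a simsun permutation of the first kind gives in the same way the case q = 1 for
  S\<^sub>n(x).

  Binomial convolution of solutions of U\<^sub>n\<^sub>+\<^sub>1 = (a + nx) U\<^sub>n + x(1-2x) U\<^sub>n' solves the recurrence
  with the constants added, so S\<^sub>n(x,m) is the m-fold binomial convolution of S\<^sub>n(x) and its
  exponential generating function is S(x,z)\<^sup>m.  Both sides have coefficients that are
  polynomials in q, hence the identity extends from natural to real q.
*)

theory Submission
  imports Defs "HOL-Combinatorics.Multiset_Permutations"
begin

section \<open>The differential recurrence and exponential generating functions\<close>

definition simsun_deriv :: "real poly \<Rightarrow> real poly" where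
  "simsun_deriv p = [:0, 1, -2:] * pderiv p"

lemma simsun_deriv_0 [simp]: "simsun_deriv 0 = 0"
  and simsun_deriv_1 [simp]: "simsun_deriv 1 = 0"
  by (simp_all add: simsun_deriv_def)

lemma simsun_deriv_add: "simsun_deriv (p + q) = simsun_deriv p + simsun_deriv q"
  by (simp add: simsun_deriv_def pderiv_add distrib_left)

lemma simsun_deriv_mult: "simsun_deriv (p * q) = simsun_deriv p * q + p * simsun_deriv q"
  by (simp add: simsun_deriv_def pderiv_mult algebra_simps)

lemma simsun_deriv_sum: "simsun_deriv (\<Sum>k\<in>A. f k) = (\<Sum>k\<in>A. simsun_deriv (f k))"
  by (induction A rule: infinite_finite_induct) (simp_all add: simsun_deriv_add)

lemma simsun_deriv_of_nat_mult: "simsun_deriv (of_nat c * p) = of_nat c * simsun_deriv p"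
  by (simp add: simsun_deriv_def pderiv_mult algebra_simps)

lemma mult_linear_monom: "[:a, b:] * monom c k = monom (a * c) k + monom (b * c) (Suc k)"
  by (rule poly_eqI) (simp add: coeff_monom coeff_pCons mult_pCons_left split: nat.splits)

lemma mult_quadratic_monom:
  "[:0, a, b:] * monom c k = monom (a * c) (Suc k) + monom (b * c) (Suc (Suc k))"
  by (rule poly_eqI) (simp add: coeff_monom coeff_pCons mult_pCons_left split: nat.splits)

lemma simsun_deriv_monom:
  "simsun_deriv (monom 1 d) = monom (of_nat d) d + monom (- 2 * of_nat d) (Suc d)"
proof (cases d)
  case (Suc d')
  have "simsun_deriv (monom 1 d) = [:0, 1, -2:] * monom (of_nat d) d'"
    using Suc by (simp add: simsun_deriv_def pderiv_monom)
  also have "\<dots> = monom (of_nat d) d + monom (- 2 * of_nat d) (Suc d)"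
    unfolding mult_quadratic_monom using Suc by simp
  finally show ?thesis .
qed (simp add: simsun_deriv_def pderiv_monom)

lemma of_nat_mult_monom: "of_nat k * monom c j = monom (of_nat k * c) j"
  by (simp add: of_nat_poly mult_pCons_left smult_monom)

text \<open>The hypothesis \<open>2 * d \<le> n\<close> makes the truncated subtraction \<open>n - 2 * d\<close> exact.\<close>
lemma simsun_step_monom:
  assumes "2 * d \<le> n"
  shows "[:a, of_nat n:] * monom 1 d + simsun_deriv (monom 1 d)
    = monom (a + of_nat d) d + monom (of_nat (n - 2 * d)) (Suc d)"
proof -
  have "[:a, of_nat n:] * monom 1 d + simsun_deriv (monom 1 d)
      = (monom a d + monom (of_nat d) d) + (monom (of_nat n) (Suc d) + monom (- 2 * of_nat d) (Suc d))"
    unfolding mult_linear_monom simsun_deriv_monom by (simp add: add_ac)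
  also have "\<dots> = monom (a + of_nat d) d + monom (of_nat (n - 2 * d)) (Suc d)"
    using assms by (simp add: add_monom of_nat_diff)
  finally show ?thesis .
qed

definition simsun_rec :: "real \<Rightarrow> (nat \<Rightarrow> real poly) \<Rightarrow> bool" where
  "simsun_rec a U \<longleftrightarrow> (\<forall>n. U (Suc n) = [:a, of_nat n:] * U n + simsun_deriv (U n))"

lemma simsun_rec_unique:
  assumes "simsun_rec a U" "simsun_rec a V" "U 0 = V 0"
  shows "U n = V n"
  using assms by (induction n) (auto simp: simsun_rec_def)

lemma simsun_rec_delta: "simsun_rec 0 (\<lambda>n. if n = 0 then 1 else 0)"
  by (simp add: simsun_rec_def)

definition binomial_conv :: "(nat \<Rightarrow> 'a::comm_semiring_1) \<Rightarrow> (nat \<Rightarrow> 'a) \<Rightarrow> nat \<Rightarrow> 'a" where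
  "binomial_conv U V n = (\<Sum>k\<le>n. of_nat (n choose k) * U k * V (n - k))"

lemma binomial_conv_0 [simp]: "binomial_conv U V 0 = U 0 * V 0"
  by (simp add: binomial_conv_def)

lemma binomial_conv_Suc:
  fixes U V :: "nat \<Rightarrow> 'a::comm_semiring_1"
  shows "binomial_conv U V (Suc n)
    = (\<Sum>k\<le>n. of_nat (n choose k) * (U (Suc k) * V (n - k) + U k * V (Suc (n - k))))"
proof -
  have shift: "(\<Sum>k\<le>Suc n. of_nat (m choose k) * U k * V (Suc n - k))
      = U 0 * V (Suc n) + (\<Sum>k\<le>n. of_nat (m choose Suc k) * U (Suc k) * V (n - k))" for m
    by (subst sum.atMost_Suc_shift) simp
  have "(\<Sum>k\<le>n. of_nat (n choose k) * U k * V (Suc (n - k)))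
      = (\<Sum>k\<le>Suc n. of_nat (n choose k) * U k * V (Suc n - k))"
    by (simp add: Suc_diff_le binomial_eq_0)
  then show ?thesis
    unfolding binomial_conv_def shift
    by (simp add: sum.distrib algebra_simps)
qed

text \<open>The Leibniz rule for \<open>simsun_deriv\<close> combines with Pascal's rule.\<close>
lemma simsun_rec_binomial_conv:
  assumes U: "simsun_rec a U" and V: "simsun_rec b V"
  shows "simsun_rec (a + b) (binomial_conv U V)"
  unfolding simsun_rec_def
proof
  fix n
  have step: "U (Suc k) * V (n - k) + U k * V (Suc (n - k))
      = [:a + b, of_nat n:] * (U k * V (n - k)) + simsun_deriv (U k * V (n - k))" if "k \<le> n" for k
  proof -
    have "U (Suc k) * V (n - k) + U k * V (Suc (n - k))
        = ([:a, of_nat k:] * U k + simsun_deriv (U k)) * V (n - k)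
          + U k * ([:b, of_nat (n - k):] * V (n - k) + simsun_deriv (V (n - k)))"
      using U V by (simp add: simsun_rec_def)
    also have "\<dots> = ([:a, of_nat k:] + [:b, of_nat (n - k):]) * (U k * V (n - k))
        + simsun_deriv (U k * V (n - k))"
      unfolding simsun_deriv_mult by (simp add: algebra_simps del: pCons_eq_iff add_pCons)
    also have "[:a, of_nat k:] + [:b, of_nat (n - k):] = [:a + b, of_nat n:]"
      using that by (simp add: of_nat_diff)
    finally show ?thesis .
  qed
  have "binomial_conv U V (Suc n)
      = (\<Sum>k\<le>n. of_nat (n choose k) * ([:a + b, of_nat n:] * (U k * V (n - k))
           + simsun_deriv (U k * V (n - k))))"
    unfolding binomial_conv_Suc by (intro sum.cong refl) (simp add: step)
  also have "\<dots> = [:a + b, of_nat n:] * binomial_conv U V n + simsun_deriv (binomial_conv U V n)"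
  proof -
    have "simsun_deriv (binomial_conv U V n)
        = (\<Sum>k\<le>n. of_nat (n choose k) * simsun_deriv (U k * V (n - k)))"
      by (simp add: binomial_conv_def simsun_deriv_sum mult.assoc simsun_deriv_of_nat_mult)
    moreover have "[:a + b, of_nat n:] * binomial_conv U V n
        = (\<Sum>k\<le>n. of_nat (n choose k) * ([:a + b, of_nat n:] * (U k * V (n - k))))"
      unfolding binomial_conv_def sum_distrib_left by (simp add: algebra_simps)
    ultimately show ?thesis by (simp add: sum.distrib distrib_left)
  qed
  finally show "binomial_conv U V (Suc n)
      = [:a + b, of_nat n:] * binomial_conv U V n + simsun_deriv (binomial_conv U V n)" .
qed

definition egf_at :: "real \<Rightarrow> (nat \<Rightarrow> real poly) \<Rightarrow> real fps" where
  "egf_at x U = Abs_fps (\<lambda>n. poly (U n) x / fact n)"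

lemma egf_at_binomial_conv: "egf_at x (binomial_conv U V) = egf_at x U * egf_at x V"
proof (rule fps_ext)
  fix n
  have "poly (binomial_conv U V n) x / fact n
      = (\<Sum>k\<le>n. (poly (U k) x / fact k) * (poly (V (n - k)) x / fact (n - k)))"
    unfolding binomial_conv_def poly_sum sum_divide_distrib
    by (intro sum.cong refl) (simp add: binomial_fact field_simps)
  then show "egf_at x (binomial_conv U V) $ n = (egf_at x U * egf_at x V) $ n"
    by (simp add: egf_at_def fps_mult_nth atLeast0AtMost)
qed

lemma egf_at_simsun_rec_power:
  assumes U: "U 0 = 1" "simsun_rec 1 U"
    and V: "\<And>m. V m 0 = 1" "\<And>m. simsun_rec (of_nat m) (V m)"
  shows "egf_at x (V m) = egf_at x U ^ m"
proof (induction m)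
  case 0
  have "V 0 n = (if n = 0 then 1 else 0)" for n
    by (rule simsun_rec_unique[OF V(2)[of 0]]) (simp_all add: simsun_rec_delta V(1))
  then show ?case by (intro fps_ext) (simp add: egf_at_def)
next
  case (Suc m)
  have "V (Suc m) n = binomial_conv (V m) U n" for n
  proof (rule simsun_rec_unique[OF V(2)])
    show "simsun_rec (of_nat (Suc m)) (binomial_conv (V m) U)"
      using simsun_rec_binomial_conv[OF V(2)[of m] U(2)] by (simp add: add.commute)
  qed (simp add: U V)
  then have "V (Suc m) = binomial_conv (V m) U" ..
  then show ?case by (simp add: egf_at_binomial_conv Suc.IH mult.commute)
qed

section \<open>Real powers of power series\<close>

lemma fps_pow_real_of_nat:
  assumes "F $ 0 = 1"
  shows "fps_pow_real F (of_nat m) = F ^ m"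
proof -
  have "fps_pow_real F (of_nat m) = (1 + fps_X) ^ m oo (F - 1)"
    by (simp add: fps_pow_real_def fps_binomial_of_nat)
  also have "\<dots> = ((1 + fps_X) oo (F - 1)) ^ m"
    by (rule fps_compose_power[symmetric]) (simp add: assms)
  also have "(1 + fps_X) oo (F - 1) = F"
    using assms by (simp add: fps_compose_add_distrib)
  finally show ?thesis .
qed

lemma gbinomial_polynomial: "\<exists>P. \<forall>q::real. q gchoose i = poly P q"
proof -
  define P :: "real poly" where
    "P = (\<Prod>j\<in>{0..<i}. smult (1 / of_nat (i - j)) [:- of_nat j, 1:])"
  have "q gchoose i = poly P q" for q
    unfolding gbinomial_altdef_of_nat P_def poly_prod
    by (intro prod.cong refl) (simp add: divide_inverse algebra_simps)
  then show ?thesis by blast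
qed

lemma polynomial_fun_eq_if_of_nat:
  fixes f g :: "real \<Rightarrow> real"
  assumes "\<exists>P. \<forall>q. f q = poly P q" "\<exists>P. \<forall>q. g q = poly P q"
    and "\<And>m::nat. f (of_nat m) = g (of_nat m)"
  shows "f q = g q"
proof -
  obtain P Q where P: "\<And>q. f q = poly P q" and Q: "\<And>q. g q = poly Q q"
    using assms(1,2) by blast
  have "range (of_nat :: nat \<Rightarrow> real) \<subseteq> {q. poly (P - Q) q = 0}"
    using assms(3) P Q by auto
  moreover have "infinite (range (of_nat :: nat \<Rightarrow> real))"
    using range_inj_infinite[of "of_nat :: nat \<Rightarrow> real"] by (simp add: inj_on_def)
  ultimately have "P - Q = 0"
    using poly_roots_finite finite_subset by blast
  then show ?thesis using P Q by simp
qed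

text \<open>The coefficients of \<open>F\<^sup>q\<close> are polynomials in \<open>q\<close>, and polynomials that agree on all
  natural numbers are equal.\<close>
lemma fps_pow_real_unique:
  assumes F: "F $ 0 = 1"
    and G: "\<And>n. \<exists>P. \<forall>q. G q $ n = poly P q" "\<And>m::nat. G (of_nat m) = F ^ m"
  shows "G q = fps_pow_real F q"
proof (rule fps_ext)
  fix n
  obtain B where B: "\<And>i (q::real). q gchoose i = poly (B i) q"
    using gbinomial_polynomial by metis
  have "fps_pow_real F q $ n = poly (\<Sum>i=0..n. smult ((F - 1) ^ i $ n) (B i)) q" for q
    by (simp add: fps_pow_real_def fps_compose_nth B poly_sum mult.commute)
  then have "\<exists>P. \<forall>q. fps_pow_real F q $ n = poly P q" by blast
  moreover have "G (of_nat m) $ n = fps_pow_real F (of_nat m) $ n" for m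
    by (simp add: G(2) fps_pow_real_of_nat F)
  ultimately show "G q $ n = fps_pow_real F q $ n"
    using polynomial_fun_eq_if_of_nat[where f = "\<lambda>q. G q $ n" and g = "\<lambda>q. fps_pow_real F q $ n"]
      G(1) by blast
qed


lemma card_filter_add_card_filter_not:
  assumes "finite S"
  shows "card {x\<in>S. P x} + card {x\<in>S. \<not> P x} = card S"
proof -
  have "card ({x\<in>S. P x} \<union> {x\<in>S. \<not> P x}) = card {x\<in>S. P x} + card {x\<in>S. \<not> P x}"
    by (rule card_Un_disjoint) (use assms in auto)
  moreover have "{x\<in>S. P x} \<union> {x\<in>S. \<not> P x} = S" by auto
  ultimately show ?thesis by simp
qed

lemma sum_if_eq_card:
  assumes "finite B"
  shows "(\<Sum>b\<in>B. if P b then u else v)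
    = of_nat (card {b\<in>B. P b}) * u + of_nat (card {b\<in>B. \<not> P b}) * (v :: 'a::semiring_1)"
proof -
  have "(\<Sum>b\<in>B. if P b then u else v) = (\<Sum>b\<in>B \<inter> {b. P b}. u) + (\<Sum>b\<in>B \<inter> - {b. P b}. v)"
    by (rule sum.If_cases[OF assms])
  also have "B \<inter> {b. P b} = {b\<in>B. P b}" by auto
  also have "B \<inter> - {b. P b} = {b\<in>B. \<not> P b}" by auto
  finally show ?thesis by simp
qed

lemma sum_bij_betw_Sigma:
  assumes "bij_betw f (SIGMA x:A. B x) C" "finite A" "\<And>x. x \<in> A \<Longrightarrow> finite (B x)"
  shows "(\<Sum>y\<in>C. g y) = (\<Sum>x\<in>A. \<Sum>b\<in>B x. g (f (x, b)))"
proof -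
  have "(\<Sum>y\<in>C. g y) = (\<Sum>z\<in>(SIGMA x:A. B x). g (f z))"
    by (rule sum.reindex_bij_betw[OF assms(1), symmetric])
  also have "\<dots> = (\<Sum>x\<in>A. \<Sum>b\<in>B x. g (f (x, b)))"
    by (subst sum.Sigma) (use assms(2,3) in \<open>auto simp: split_def\<close>)
  finally show ?thesis .
qed

section \<open>Simsun permutations of the second kind\<close>

definition del_time :: "(nat \<Rightarrow> nat) \<Rightarrow> nat \<Rightarrow> nat \<Rightarrow> nat" where
  "del_time f m i = (LEAST j. 0 < j \<and> (f ^^ j) i \<le> m)"

lemma del_large_eq_funpow_del_time: "del_large f m i = (f ^^ del_time f m i) i"
  by (simp add: del_large_def del_time_def)

lemma del_time_spec:
  assumes "\<exists>j>0. (f ^^ j) i \<le> m"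
  shows "0 < del_time f m i" "(f ^^ del_time f m i) i \<le> m"
  using LeastI_ex[OF assms] unfolding del_time_def by auto

lemma del_time_le:
  assumes "0 < j" "(f ^^ j) i \<le> m"
  shows "del_time f m i \<le> j"
  unfolding del_time_def by (rule Least_le) (use assms in simp)

lemma del_large_small:
  assumes "f i \<le> m"
  shows "del_time f m i = 1" "del_large f m i = f i"
proof -
  show T: "del_time f m i = 1"
    unfolding del_time_def by (rule Least_equality) (use assms in auto)
  show "del_large f m i = f i" by (simp add: del_large_eq_funpow_del_time T)
qed

lemma del_large_large:
  assumes ex: "\<exists>j>0. (f ^^ j) i \<le> m" and big: "\<not> f i \<le> m"
  shows "\<exists>j>0. (f ^^ j) (f i) \<le> m" "del_time f m i = Suc (del_time f m (f i))"
    "del_large f m i = del_large f m (f i)"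
proof -
  have shift: "(f ^^ Suc j) i = (f ^^ j) (f i)" for j
    by (simp add: funpow_Suc_right del: funpow.simps)
  obtain J where J: "0 < J" "(f ^^ J) i \<le> m" using ex by blast
  moreover have "J \<noteq> 1" using J big by auto
  ultimately obtain J' where "J = Suc J'" "0 < J'" by (cases J) auto
  with J show ex': "\<exists>j>0. (f ^^ j) (f i) \<le> m" by (auto simp: shift simp del: funpow.simps)
  show T: "del_time f m i = Suc (del_time f m (f i))"
  proof (rule antisym)
    show "del_time f m i \<le> Suc (del_time f m (f i))"
      using del_time_spec[OF ex'] by (intro del_time_le) (simp_all add: shift del: funpow.simps)
    have "del_time f m i \<noteq> 1" using del_time_spec(2)[OF ex] big by auto
    then obtain k where k: "del_time f m i = Suc k" "0 < k"
      using del_time_spec(1)[OF ex] by (cases "del_time f m i") auto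
    then have "del_time f m (f i) \<le> k"
      using del_time_spec(2)[OF ex] by (intro del_time_le) (simp_all add: shift del: funpow.simps)
    then show "Suc (del_time f m (f i)) \<le> del_time f m i" using k by simp
  qed
  show "del_large f m i = del_large f m (f i)"
    by (simp add: del_large_eq_funpow_del_time T shift del: funpow.simps)
qed

text \<open>\<open>insert_after \<pi> c N\<close> inserts the new letter \<open>N\<close> right after \<open>c\<close> in the cycle
  decomposition of \<open>\<pi>\<close>; for \<open>c = N\<close> it adds the fixed point \<open>N\<close>.\<close>
definition insert_after :: "(nat \<Rightarrow> nat) \<Rightarrow> nat \<Rightarrow> nat \<Rightarrow> nat \<Rightarrow> nat" where
  "insert_after \<pi> c N = (\<lambda>x. if x = c then N else if x = N then \<pi> c else \<pi> x)"

lemma insert_after_self: "\<pi> N = N \<Longrightarrow> insert_after \<pi> N N = \<pi>"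
  by (auto simp: insert_after_def)

lemma insert_after_eq_comp_transpose: "\<pi> N = N \<Longrightarrow> insert_after \<pi> c N = \<pi> \<circ> transpose c N"
  by (auto simp: insert_after_def transpose_def)

lemma insert_after_permutes:
  assumes "\<pi> permutes {1..n}" "c \<in> {1..Suc n}"
  shows "insert_after \<pi> c (Suc n) permutes {1..Suc n}"
proof -
  have "\<pi> permutes {1..Suc n}" using assms(1) by (rule permutes_subset) auto
  moreover have "transpose c (Suc n) permutes {1..Suc n}"
    using assms(2) by (intro permutes_swap_id) auto
  ultimately show ?thesis
    using insert_after_eq_comp_transpose[of \<pi> "Suc n" c] assms(1)
    by (simp add: permutes_not_in permutes_compose)
qed

lemma del_large_unfold:
  assumes "f x \<le> m \<or> (\<exists>j>0. (f ^^ j) (f x) \<le> m)"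
  shows "\<exists>j>0. (f ^^ j) x \<le> m"
    and "del_large f m x = (if f x \<le> m then f x else del_large f m (f x))"
proof -
  show ex: "\<exists>j>0. (f ^^ j) x \<le> m"
    using assms by (metis funpow_Suc_right o_apply One_nat_def funpow_0 zero_less_Suc)
  show "del_large f m x = (if f x \<le> m then f x else del_large f m (f x))"
    using del_large_small(2) del_large_large(3)[OF ex] by auto
qed

lemma del_large_insert_after:
  assumes \<pi>N: "\<pi> N = N" and Nm: "m < N" and cN: "c \<noteq> N"
    and ex: "\<exists>j>0. (\<pi> ^^ j) i \<le> m"
  shows "(\<exists>j>0. (insert_after \<pi> c N ^^ j) i \<le> m)
    \<and> del_large (insert_after \<pi> c N) m i = del_large \<pi> m i"
  using ex
proof (induction "del_time \<pi> m i" arbitrary: i rule: less_induct)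
  case less
  let ?p = "insert_after \<pi> c N"
  have iN: "i \<noteq> N"
  proof
    assume "i = N"
    moreover have "(\<pi> ^^ j) N = N" for j using \<pi>N by (induction j) auto
    ultimately show False using less.prems Nm by auto
  qed
  have IH: "(\<exists>j>0. (?p ^^ j) (\<pi> i) \<le> m) \<and> del_large ?p m (\<pi> i) = del_large \<pi> m (\<pi> i)"
    if "\<not> \<pi> i \<le> m"
    using less.hyps[of "\<pi> i"] del_large_large[OF less.prems that] by simp
  have next_ok: "\<pi> i \<le> m \<or> (\<exists>j>0. (?p ^^ j) (\<pi> i) \<le> m)"
    and next_eq: "(if \<pi> i \<le> m then \<pi> i else del_large ?p m (\<pi> i)) = del_large \<pi> m i"
    using IH del_large_small(2)[of \<pi> i m] del_large_large(3)[OF less.prems] by auto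
  show ?case
  proof (cases "i = c")
    case False
    then have pi: "?p i = \<pi> i" using iN by (simp add: insert_after_def)
    show ?thesis using del_large_unfold[of ?p i m, unfolded pi, OF next_ok] next_eq by simp
  next
    case True
    have pc: "?p i = N" and pN: "?p N = \<pi> i" using True cN by (simp_all add: insert_after_def)
    note N = del_large_unfold[of ?p N m, unfolded pN, OF next_ok]
    have "?p i \<le> m \<or> (\<exists>j>0. (?p ^^ j) (?p i) \<le> m)" using N(1) pc by simp
    then show ?thesis using del_large_unfold[of ?p i m] N(2) next_eq pc Nm by simp
  qed
qed

lemma simsun2_iff: "simsun2 n p \<longleftrightarrow> (\<forall>m\<le>n. no_double_exc m (del_large p m))"
proof
  assume "simsun2 n p"
  then show "\<forall>m\<le>n. no_double_exc m (del_large p m)"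
    unfolding simsun2_def by (metis atLeastAtMost_iff diff_diff_cancel diff_le_self le0)
qed (auto simp: simsun2_def)

lemma no_double_exc_cong:
  "(\<And>i. i \<in> {1..m} \<Longrightarrow> \<sigma> i = \<sigma>' i) \<Longrightarrow> no_double_exc m \<sigma> = no_double_exc m \<sigma>'"
  unfolding no_double_exc_def by metis

lemma del_large_permutes_top:
  assumes "p permutes {1..n}" "i \<in> {1..n}"
  shows "del_large p n i = p i"
proof -
  have "p i \<le> n" using permutes_in_image[OF assms(1)] assms(2) by auto
  then show ?thesis by (rule del_large_small)
qed

lemma permutes_funpow_return:
  assumes "\<pi> permutes {1..(n::nat)}"
  obtains j where "j > 0" "(\<pi> ^^ j) i = i"
proof -
  have "permutation \<pi>" using assms permutation_permutes by blast
  then obtain j where "j > 0" "(\<pi> ^^ j) i = i" by (rule permutation_self)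
  then show ?thesis by (rule that)
qed

lemma simsun2_insert_after_iff:
  assumes \<pi>: "\<pi> permutes {1..n}" and c: "c \<in> {1..Suc n}"
  shows "simsun2 (Suc n) (insert_after \<pi> c (Suc n))
    \<longleftrightarrow> simsun2 n \<pi> \<and> no_double_exc (Suc n) (insert_after \<pi> c (Suc n))"
proof -
  let ?p = "insert_after \<pi> c (Suc n)"
  have N: "\<pi> (Suc n) = Suc n" using \<pi> by (simp add: permutes_not_in)
  have top: "no_double_exc (Suc n) (del_large ?p (Suc n)) = no_double_exc (Suc n) ?p"
    using del_large_permutes_top[OF insert_after_permutes[OF \<pi> c]] by (intro no_double_exc_cong)
  have low: "no_double_exc m (del_large ?p m) = no_double_exc m (del_large \<pi> m)" if "m \<le> n" for m
  proof (rule no_double_exc_cong)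
    fix i assume i: "i \<in> {1..m}"
    show "del_large ?p m i = del_large \<pi> m i"
    proof (cases "c = Suc n")
      case False
      obtain j where "j > 0" "(\<pi> ^^ j) i = i" using permutes_funpow_return[OF \<pi>] .
      then have "\<exists>j>0. (\<pi> ^^ j) i \<le> m" using i by auto
      then show ?thesis using del_large_insert_after[of \<pi> "Suc n" m c i, OF N _ False] that by simp
    qed (simp add: insert_after_self[of \<pi> "Suc n", OF N])
  qed
  have "simsun2 (Suc n) ?p \<longleftrightarrow> (\<forall>m\<le>n. no_double_exc m (del_large ?p m))
      \<and> no_double_exc (Suc n) (del_large ?p (Suc n))"
    unfolding simsun2_iff by (auto simp: le_Suc_eq)
  also have "\<dots> \<longleftrightarrow> simsun2 n \<pi> \<and> no_double_exc (Suc n) ?p"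
    unfolding simsun2_iff top using low by auto
  finally show ?thesis .
qed

text \<open>A double excedance can only be created at \<open>c\<close>, which becomes an excedance.\<close>
lemma no_double_exc_insert_after_iff:
  assumes \<pi>: "\<pi> permutes {1..n}" and c: "c \<in> {1..Suc n}" and nde: "no_double_exc n \<pi>"
  shows "no_double_exc (Suc n) (insert_after \<pi> c (Suc n)) \<longleftrightarrow> c = Suc n \<or> \<not> inv \<pi> c < c"
proof -
  let ?p = "insert_after \<pi> c (Suc n)"
  have N: "\<pi> (Suc n) = Suc n" using \<pi> by (simp add: permutes_not_in)
  have inr: "x \<in> {1..n} \<Longrightarrow> \<pi> x \<in> {1..n}" for x using permutes_in_image[OF \<pi>] by blast
  have inv_in: "x \<in> {1..n} \<Longrightarrow> inv \<pi> x \<in> {1..n}" for x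
    using permutes_in_image[OF permutes_inv[OF \<pi>]] by blast
  have pinv: "\<pi> (inv \<pi> x) = x" "inv \<pi> (\<pi> x) = x" for x
    using \<pi> by (simp_all add: permutes_inverses)
  show ?thesis
  proof (cases "c = Suc n")
    case True
    have "no_double_exc (Suc n) \<pi>"
      using nde N by (auto simp: no_double_exc_def le_Suc_eq)
    then show ?thesis using True insert_after_self[of \<pi> "Suc n", OF N] by simp
  next
    case False
    then have cn: "c \<in> {1..n}" using c by auto
    have pc: "?p c = Suc n" and pN: "?p (Suc n) = \<pi> c"
      and po: "\<And>x. x \<noteq> c \<Longrightarrow> x \<noteq> Suc n \<Longrightarrow> ?p x = \<pi> x"
      using False by (auto simp: insert_after_def)
    show ?thesis
    proof
      assume H: "no_double_exc (Suc n) ?p"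
      show "c = Suc n \<or> \<not> inv \<pi> c < c"
      proof (rule disjI2, rule notI)
        assume lt: "inv \<pi> c < c"
        have "?p (inv \<pi> c) = c" using po[of "inv \<pi> c"] lt inv_in[OF cn] pinv by auto
        moreover have "inv \<pi> c \<in> {1..Suc n}" "c \<in> {1..Suc n}" "c < ?p c"
          using inv_in[OF cn] cn pc by auto
        ultimately show False using H lt unfolding no_double_exc_def by blast
      qed
    next
      assume "c = Suc n \<or> \<not> inv \<pi> c < c"
      then have A: "\<not> inv \<pi> c < c" using False by simp
      show "no_double_exc (Suc n) ?p"
        unfolding no_double_exc_def
      proof (rule notI, elim bexE conjE)
        fix x y assume x: "x \<in> {1..Suc n}" and y: "y \<in> {1..Suc n}"
          and h: "?p y = x" "y < x" "x < ?p x"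
        have xN: "x \<noteq> Suc n" using h pN inr[OF cn] by auto
        have yN: "y \<noteq> Suc n" using h x by auto
        show False
        proof (cases "x = c")
          case True
          then have "\<pi> y = c" using po[OF _ yN] h by auto
          then have "inv \<pi> c = y" using pinv(2) by metis
          then show False using A h True by simp
        next
          case xc: False
          have yc: "y \<noteq> c" using h pc xN by auto
          have "\<pi> y = x" "x < \<pi> x" using h po[OF yc yN] po[OF xc xN] by auto
          moreover have "x \<in> {1..n}" "y \<in> {1..n}" using x y xN yN by auto
          ultimately show False using nde h unfolding no_double_exc_def by blast
        qed
      qed
    qed
  qed
qed

lemma exc_insert_after:
  assumes \<pi>: "\<pi> permutes {1..n}" and c: "c \<in> {1..Suc n}"
  shows "exc (Suc n) (insert_after \<pi> c (Suc n))
    = exc n \<pi> + (if c \<noteq> Suc n \<and> \<pi> c \<le> c then 1 else 0)"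
proof -
  let ?E = "{i\<in>{1..n}. \<pi> i > i}"
  have N: "\<pi> (Suc n) = Suc n" using \<pi> by (simp add: permutes_not_in)
  show ?thesis
  proof (cases "c = Suc n")
    case True
    have "{i\<in>{1..Suc n}. \<pi> i > i} = ?E" using N by (auto simp: le_Suc_eq)
    then show ?thesis using True insert_after_self[of \<pi> "Suc n", OF N] by (simp add: exc_def)
  next
    case False
    then have cn: "c \<in> {1..n}" using c by auto
    have "\<pi> c \<in> {1..n}" using permutes_in_image[OF \<pi>] cn by blast
    then have "{i\<in>{1..Suc n}. insert_after \<pi> c (Suc n) i > i} = insert c ?E"
      using cn False by (auto simp: insert_after_def le_Suc_eq)
    then show ?thesis using False cn by (auto simp: exc_def card_insert_if)
  qed
qed

definition fun_orbit :: "(nat \<Rightarrow> nat) \<Rightarrow> nat \<Rightarrow> nat set" where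
  "fun_orbit f i = range (\<lambda>k. (f ^^ k) i)"

lemma mem_fun_orbit_iff: "y \<in> fun_orbit f i \<longleftrightarrow> (\<exists>k. y = (f ^^ k) i)"
  by (auto simp: fun_orbit_def)

lemma fun_orbit_eq_insert: "fun_orbit f i = insert i (fun_orbit f (f i))"
proof -
  have "(\<exists>k. y = (f ^^ k) i) \<longleftrightarrow> y = i \<or> (\<exists>k. y = (f ^^ k) (f i))" for y
    by (metis funpow_0 funpow_Suc_right not0_implies_Suc o_apply)
  then show ?thesis by (auto simp: mem_fun_orbit_iff)
qed

lemma fun_orbit_fixed:
  assumes "f i = i"
  shows "fun_orbit f i = {i}"
proof -
  have "(f ^^ k) i = i" for k using assms by (induction k) auto
  then show ?thesis by (auto simp: mem_fun_orbit_iff)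
qed

lemma cyc_eq_card_fun_orbit: "cyc n p = card (fun_orbit p ` {1..n})"
  by (simp add: cyc_def fun_orbit_def full_SetCompr_eq)

lemma fun_orbit_subset:
  assumes "\<pi> permutes {1..n}" "i \<in> {1..n}"
  shows "fun_orbit \<pi> i \<subseteq> {1..n}"
  using permutes_in_funpow_image[OF assms] by (auto simp: mem_fun_orbit_iff)

text \<open>Along the orbit of \<open>i\<close>, \<open>insert_after \<pi> c N\<close> follows \<open>\<pi>\<close> with a detour through \<open>N\<close>
  after each visit of \<open>c\<close>.\<close>
lemma funpow_insert_after:
  assumes \<pi>: "\<pi> permutes {1..n}" and i: "i \<in> {1..n}" and c: "c \<in> {1..n}"
  shows "\<exists>k'. (insert_after \<pi> c (Suc n) ^^ k) i = (\<pi> ^^ k') i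
      \<or> (insert_after \<pi> c (Suc n) ^^ k) i = Suc n \<and> (\<pi> ^^ k') i = c"
    and "\<exists>k. (insert_after \<pi> c (Suc n) ^^ k) i = (\<pi> ^^ k') i"
proof -
  let ?p = "insert_after \<pi> c (Suc n)"
  have inn: "(\<pi> ^^ k') i \<noteq> Suc n" for k'
    using permutes_in_funpow_image[OF \<pi> i, of k'] by auto
  have pc: "?p c = Suc n" and pN: "?p (Suc n) = \<pi> c"
    and po: "\<And>x. x \<noteq> c \<Longrightarrow> x \<noteq> Suc n \<Longrightarrow> ?p x = \<pi> x"
    using c by (auto simp: insert_after_def)
  show "\<exists>k'. (?p ^^ k) i = (\<pi> ^^ k') i \<or> (?p ^^ k) i = Suc n \<and> (\<pi> ^^ k') i = c"
  proof (induction k)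
    case (Suc k)
    then obtain k' where "(?p ^^ k) i = (\<pi> ^^ k') i \<or> (?p ^^ k) i = Suc n \<and> (\<pi> ^^ k') i = c"
      by blast
    then consider "(?p ^^ k) i = (\<pi> ^^ k') i" "(\<pi> ^^ k') i = c"
      | "(?p ^^ k) i = (\<pi> ^^ k') i" "(\<pi> ^^ k') i \<noteq> c"
      | "(?p ^^ k) i = Suc n" "(\<pi> ^^ k') i = c" by blast
    then show ?case
    proof cases
      case 1 then show ?thesis using pc by (intro exI[of _ k']) simp
    next
      case 2 then show ?thesis using po inn by (intro exI[of _ "Suc k'"]) simp
    next
      case 3 then show ?thesis using pN by (intro exI[of _ "Suc k'"]) simp
    qed
  qed (rule exI[of _ 0], simp)
  show "\<exists>k. (?p ^^ k) i = (\<pi> ^^ k') i"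
  proof (induction k')
    case (Suc k')
    then obtain k where k: "(?p ^^ k) i = (\<pi> ^^ k') i" by blast
    show ?case
    proof (cases "(\<pi> ^^ k') i = c")
      case True
      then show ?thesis using k pc pN by (intro exI[of _ "Suc (Suc k)"]) simp
    next
      case False
      then show ?thesis using k po inn by (intro exI[of _ "Suc k"]) simp
    qed
  qed (rule exI[of _ 0], simp)
qed

lemma fun_orbit_insert_after:
  assumes \<pi>: "\<pi> permutes {1..n}" and i: "i \<in> {1..n}" and c: "c \<in> {1..n}"
  shows "fun_orbit (insert_after \<pi> c (Suc n)) i
    = (if c \<in> fun_orbit \<pi> i then insert (Suc n) (fun_orbit \<pi> i) else fun_orbit \<pi> i)"
proof -
  let ?p = "insert_after \<pi> c (Suc n)"
  note fw = funpow_insert_after(1)[OF assms] and bw = funpow_insert_after(2)[OF assms]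
  have sub: "fun_orbit ?p i \<subseteq> insert (Suc n) (fun_orbit \<pi> i)"
    and sub_c: "c \<notin> fun_orbit \<pi> i \<Longrightarrow> fun_orbit ?p i \<subseteq> fun_orbit \<pi> i"
    using fw by (fastforce simp: mem_fun_orbit_iff)+
  have sup: "fun_orbit \<pi> i \<subseteq> fun_orbit ?p i"
    using bw by (auto simp: mem_fun_orbit_iff) (metis bw)
  have "Suc n \<in> fun_orbit ?p i" if c_orbit: "c \<in> fun_orbit \<pi> i"
  proof -
    obtain k' where "c = (\<pi> ^^ k') i" using c_orbit unfolding mem_fun_orbit_iff by blast
    moreover obtain k where "(?p ^^ k) i = (\<pi> ^^ k') i" using bw by blast
    ultimately have "(?p ^^ Suc k) i = Suc n" using c by (simp add: insert_after_def)
    then show ?thesis unfolding mem_fun_orbit_iff by metis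
  qed
  with sub sub_c sup show ?thesis by auto
qed

lemma cyc_insert_after:
  assumes \<pi>: "\<pi> permutes {1..n}" and c: "c \<in> {1..Suc n}"
  shows "cyc (Suc n) (insert_after \<pi> c (Suc n)) = cyc n \<pi> + (if c = Suc n then 1 else 0)"
proof -
  let ?p = "insert_after \<pi> c (Suc n)"
  let ?O = "fun_orbit \<pi> ` {1..n}"
  have N: "\<pi> (Suc n) = Suc n" using \<pi> by (simp add: permutes_not_in)
  have outside: "Suc n \<notin> A" if "A \<in> ?O" for A
    using that fun_orbit_subset[OF \<pi>] by fastforce
  show ?thesis
  proof (cases "c = Suc n")
    case True
    have "{Suc n} \<notin> ?O" using outside by blast
    then have "card (fun_orbit \<pi> ` {1..Suc n}) = Suc (card ?O)"
      by (simp add: atLeastAtMostSuc_conv fun_orbit_fixed[of \<pi>, OF N])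
    then show ?thesis
      using True insert_after_self[of \<pi> "Suc n", OF N] by (simp add: cyc_eq_card_fun_orbit)
  next
    case False
    then have cn: "c \<in> {1..n}" using c by auto
    define g where "g A = (if c \<in> A then insert (Suc n) A else A)" for A
    have pcn: "\<pi> c \<in> {1..n}" using permutes_in_image[OF \<pi>] cn by blast
    obtain j where j: "j > 0" "(\<pi> ^^ j) c = c" using permutes_funpow_return[OF \<pi>] .
    then have "(\<pi> ^^ (j - 1)) (\<pi> c) = c" by (metis Suc_diff_1 funpow_Suc_right o_apply)
    then have "c \<in> fun_orbit \<pi> (\<pi> c)" unfolding mem_fun_orbit_iff by metis
    then have "Suc n \<in> fun_orbit ?p (\<pi> c)"
      using fun_orbit_insert_after[OF \<pi> pcn cn] by simp
    moreover have "?p (Suc n) = \<pi> c" using False by (simp add: insert_after_def)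
    ultimately have "fun_orbit ?p (Suc n) = fun_orbit ?p (\<pi> c)"
      using fun_orbit_eq_insert[of ?p "Suc n"] by (simp add: insert_absorb)
    then have "fun_orbit ?p (Suc n) \<in> fun_orbit ?p ` {1..n}" using pcn by blast
    then have "fun_orbit ?p ` {1..Suc n} = fun_orbit ?p ` {1..n}"
      by (simp add: atLeastAtMostSuc_conv insert_absorb)
    also have "\<dots> = g ` ?O"
      unfolding image_image g_def using fun_orbit_insert_after[OF \<pi> _ cn] by simp
    finally have "fun_orbit ?p ` {1..Suc n} = g ` ?O" .
    moreover have "inj_on g ?O"
    proof (rule inj_onI)
      fix A B assume "A \<in> ?O" "B \<in> ?O" and gAB: "g A = g B"
      then have "Suc n \<notin> A" "Suc n \<notin> B" using outside by blast+
      then have "g A - {Suc n} = A" "g B - {Suc n} = B" by (auto simp: g_def)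
      then show "A = B" using gAB by metis
    qed
    ultimately show ?thesis using False by (simp add: cyc_eq_card_fun_orbit card_image)
  qed
qed


lemma SS_finite: "finite (SS n)"
  by (rule finite_subset[of _ "{p. p permutes {1..n}}"]) (auto simp: SS_def finite_permutations)

lemma SS_no_double_exc:
  assumes "\<pi> \<in> SS n"
  shows "no_double_exc n \<pi>"
proof -
  have \<pi>: "\<pi> permutes {1..n}" and "simsun2 n \<pi>" using assms by (auto simp: SS_def)
  then have "no_double_exc n (del_large \<pi> n)" by (simp add: simsun2_iff)
  moreover have "no_double_exc n (del_large \<pi> n) = no_double_exc n \<pi>"
    by (rule no_double_exc_cong) (rule del_large_permutes_top[OF \<pi>])
  ultimately show ?thesis by simp
qed

text \<open>Besides the new fixed point \<open>n + 1\<close>, the letters after which \<open>n + 1\<close> can be inserted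
  into \<open>\<pi>\<close> without creating a double excedance.\<close>
definition SS_slots :: "(nat \<Rightarrow> nat) \<Rightarrow> nat \<Rightarrow> nat set" where
  "SS_slots \<pi> n = {c\<in>{1..n}. \<not> inv \<pi> c < c}"

lemma finite_SS_slots [simp]: "finite (SS_slots \<pi> n)"
  by (simp add: SS_slots_def)

text \<open>The slots are the images of the \<open>n - exc n \<pi>\<close> non-excedances, and without double
  excedances every excedance is a slot.\<close>
lemma card_SS_slots:
  assumes \<pi>: "\<pi> permutes {1..n}" and nde: "no_double_exc n \<pi>"
  shows "card {c\<in>SS_slots \<pi> n. \<not> \<pi> c \<le> c} = exc n \<pi>"
    and "card {c\<in>SS_slots \<pi> n. \<pi> c \<le> c} = n - 2 * exc n \<pi>"
    and "2 * exc n \<pi> \<le> n"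
proof -
  have pinv: "\<pi> (inv \<pi> x) = x" "inv \<pi> (\<pi> x) = x" for x
    using \<pi> by (simp_all add: permutes_inverses)
  have inv_in: "x \<in> {1..n} \<Longrightarrow> inv \<pi> x \<in> {1..n}" for x
    using permutes_in_image[OF permutes_inv[OF \<pi>]] by blast
  have inr: "x \<in> {1..n} \<Longrightarrow> \<pi> x \<in> {1..n}" for x using permutes_in_image[OF \<pi>] by blast
  have "{c\<in>SS_slots \<pi> n. \<not> \<pi> c \<le> c} = {c\<in>{1..n}. \<pi> c > c}"
  proof (rule set_eqI, rule iffI)
    fix c assume c: "c \<in> {c\<in>{1..n}. \<pi> c > c}"
    have "\<not> inv \<pi> c < c"
      using nde c inv_in[of c] pinv(1)[of c] unfolding no_double_exc_def by fastforce
    then show "c \<in> {c\<in>SS_slots \<pi> n. \<not> \<pi> c \<le> c}" using c by (auto simp: SS_slots_def)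
  qed (auto simp: SS_slots_def)
  then show exc: "card {c\<in>SS_slots \<pi> n. \<not> \<pi> c \<le> c} = exc n \<pi>" by (simp add: exc_def)
  have "SS_slots \<pi> n = \<pi> ` {d\<in>{1..n}. \<pi> d \<le> d}"
  proof (rule set_eqI, rule iffI)
    fix c assume c: "c \<in> SS_slots \<pi> n"
    then have "inv \<pi> c \<in> {d\<in>{1..n}. \<pi> d \<le> d}" using inv_in pinv(1) by (auto simp: SS_slots_def)
    then show "c \<in> \<pi> ` {d\<in>{1..n}. \<pi> d \<le> d}" using pinv(1)[of c] by (metis image_eqI)
  qed (use inr in \<open>force simp: SS_slots_def pinv(2)\<close>)
  moreover have "inj_on \<pi> {d\<in>{1..n}. \<pi> d \<le> d}"
    using permutes_inj_on[OF \<pi>] by (rule inj_on_subset) auto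
  ultimately have "card (SS_slots \<pi> n) = card {d\<in>{1..n}. \<pi> d \<le> d}"
    by (simp add: card_image)
  moreover have "card {d\<in>{1..n}. \<pi> d \<le> d} + exc n \<pi> = n"
    using card_filter_add_card_filter_not[of "{1..n}" "\<lambda>d. \<pi> d \<le> d"]
    by (simp add: exc_def not_le)
  moreover have "card {c\<in>SS_slots \<pi> n. \<pi> c \<le> c} + exc n \<pi> = card (SS_slots \<pi> n)"
    using card_filter_add_card_filter_not[of "SS_slots \<pi> n" "\<lambda>c. \<pi> c \<le> c"] exc
    by (simp add: SS_slots_def)
  ultimately show "card {c\<in>SS_slots \<pi> n. \<pi> c \<le> c} = n - 2 * exc n \<pi>" "2 * exc n \<pi> \<le> n"
    by simp_all
qed

lemma insert_after_mem_SS_Suc_iff: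
  assumes "\<pi> \<in> SS n" "c \<in> {1..Suc n}"
  shows "insert_after \<pi> c (Suc n) \<in> SS (Suc n) \<longleftrightarrow> c \<in> insert (Suc n) (SS_slots \<pi> n)"
proof -
  have \<pi>: "\<pi> permutes {1..n}" "simsun2 n \<pi>" using assms(1) by (auto simp: SS_def)
  show ?thesis
    using simsun2_insert_after_iff[OF \<pi>(1) assms(2)] insert_after_permutes[OF \<pi>(1) assms(2)]
      no_double_exc_insert_after_iff[OF \<pi>(1) assms(2) SS_no_double_exc[OF assms(1)]] \<pi> assms(2)
    by (auto simp: SS_def SS_slots_def)
qed

lemma inj_on_insert_after:
  "inj_on (\<lambda>(\<pi>, c). insert_after \<pi> c (Suc n)) (SIGMA \<pi>:{\<pi>. \<pi> permutes {1..n}}. {1..Suc n})"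
proof (rule inj_onI, clarify)
  fix \<pi> c \<pi>' c'
  assume \<pi>: "\<pi> permutes {1..n}" "\<pi>' permutes {1..n}" and c: "c \<in> {1..Suc n}"
    and e: "insert_after \<pi> c (Suc n) = insert_after \<pi>' c' (Suc n)"
  have N: "\<pi> (Suc n) = Suc n" "\<pi>' (Suc n) = Suc n" using \<pi> by (simp_all add: permutes_not_in)
  have "insert_after \<pi> c (Suc n) c' = Suc n"
    using fun_cong[OF e, of c'] by (simp add: insert_after_def)
  then have "insert_after \<pi> c (Suc n) c = insert_after \<pi> c (Suc n) c'"
    by (simp add: insert_after_def)
  then have cc: "c = c'"
    using permutes_inj[OF insert_after_permutes[OF \<pi>(1) c]] by (metis injD)
  have "\<pi> x = \<pi>' x" for x
    using fun_cong[OF e, of x] fun_cong[OF e, of "Suc n"] N cc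
    by (cases "x = c"; cases "x = Suc n") (auto simp: insert_after_def split: if_splits)
  then show "\<pi> = \<pi>' \<and> c = c'" using cc by auto
qed

text \<open>The inverse of the insertion: \<open>c = p\<^sup>-\<^sup>1 (n + 1)\<close> and \<open>\<pi> = p \<circ> (c n+1)\<close>.\<close>
lemma permutes_Suc_eq_insert_after:
  assumes p: "p permutes {1..Suc n}"
  obtains \<pi> c where "\<pi> permutes {1..n}" "c \<in> {1..Suc n}" "insert_after \<pi> c (Suc n) = p"
proof
  define c where "c = inv p (Suc n)"
  show c: "c \<in> {1..Suc n}"
    unfolding c_def using permutes_in_image[OF permutes_inv[OF p]] by simp
  have pc: "p c = Suc n" unfolding c_def using p by (simp add: permutes_inverses)
  have "p \<circ> transpose c (Suc n) permutes {1..Suc n}"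
    using c by (intro permutes_compose[OF _ p] permutes_swap_id) auto
  moreover have "(p \<circ> transpose c (Suc n)) x = x" if "x \<in> {1..Suc n} - {1..n}" for x
    using that by (cases "x = Suc n") (auto simp: pc)
  ultimately show "p \<circ> transpose c (Suc n) permutes {1..n}" by (rule permutes_superset)
  show "insert_after (p \<circ> transpose c (Suc n)) c (Suc n) = p"
    by (auto simp: insert_after_def pc transpose_def)
qed

lemma bij_betw_insert_after_SS:
  "bij_betw (\<lambda>(\<pi>, c). insert_after \<pi> c (Suc n))
     (SIGMA \<pi>:SS n. insert (Suc n) (SS_slots \<pi> n)) (SS (Suc n))"
proof (rule bij_betw_imageI)
  show "inj_on (\<lambda>(\<pi>, c). insert_after \<pi> c (Suc n)) (SIGMA \<pi>:SS n. insert (Suc n) (SS_slots \<pi> n))"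
    by (rule inj_on_subset[OF inj_on_insert_after]) (auto simp: SS_def SS_slots_def)
  have "p \<in> (\<lambda>(\<pi>, c). insert_after \<pi> c (Suc n)) ` (SIGMA \<pi>:SS n. insert (Suc n) (SS_slots \<pi> n))"
    if p: "p \<in> SS (Suc n)" for p
  proof -
    obtain \<pi> c where \<pi>: "\<pi> permutes {1..n}" and c: "c \<in> {1..Suc n}"
      and pe: "insert_after \<pi> c (Suc n) = p"
      using permutes_Suc_eq_insert_after[of p n] p by (auto simp: SS_def)
    have "\<pi> \<in> SS n" using simsun2_insert_after_iff[OF \<pi> c] p pe \<pi> by (simp add: SS_def)
    moreover have "c \<in> insert (Suc n) (SS_slots \<pi> n)"
      using insert_after_mem_SS_Suc_iff[OF \<open>\<pi> \<in> SS n\<close> c] pe p by simp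
    ultimately show ?thesis using pe by (auto intro!: image_eqI[of _ _ "(\<pi>, c)"])
  qed
  moreover have "insert_after \<pi> c (Suc n) \<in> SS (Suc n)"
    if "\<pi> \<in> SS n" "c \<in> insert (Suc n) (SS_slots \<pi> n)" for \<pi> c
    using that insert_after_mem_SS_Suc_iff[OF that(1)] by (auto simp: SS_slots_def)
  ultimately show "(\<lambda>(\<pi>, c). insert_after \<pi> c (Suc n)) ` (SIGMA \<pi>:SS n. insert (Suc n) (SS_slots \<pi> n))
    = SS (Suc n)" by auto
qed

lemma map_poly_pderiv_monom: "map_poly pderiv (monom a k) = monom (pderiv a) k"
  by (rule poly_eqI) (simp add: coeff_map_poly coeff_monom)

lemma map_poly_pderiv_add: "map_poly pderiv (p + q) = map_poly pderiv p + map_poly pderiv q"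
  by (rule poly_eqI) (simp add: coeff_map_poly pderiv_add)

lemma map_poly_pderiv_sum: "map_poly pderiv (\<Sum>x\<in>A. f x) = (\<Sum>x\<in>A. map_poly pderiv (f x))"
  by (induction A rule: infinite_finite_induct) (simp_all add: map_poly_pderiv_add)

lemma S2_step_monom:
  assumes "2 * e \<le> n"
  shows "([:0, 1:] + [:[:0, of_nat n:]:]) * monom (monom (1::real) e) cy
      + [:[:0, 1, -2:]:] * map_poly pderiv (monom (monom 1 e) cy)
    = monom (monom 1 e) (Suc cy) + of_nat e * monom (monom 1 e) cy
      + of_nat (n - 2 * e) * monom (monom 1 (Suc e)) cy"
proof -
  have shift: "[:0, 1:] * monom (monom (1::real) e) cy = monom (monom 1 e) (Suc cy)"
    by (rule poly_eqI) (simp add: coeff_monom coeff_pCons mult_pCons_left split: nat.splits)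
  have inner: "[:[:0, of_nat n:]:] * monom (monom 1 e) cy
      + [:[:0, 1, -2:]:] * map_poly pderiv (monom (monom 1 e) cy)
    = monom ([:0, of_nat n:] * monom 1 e + simsun_deriv (monom 1 e)) cy"
    by (simp add: map_poly_pderiv_monom smult_monom add_monom simsun_deriv_def)
  have "([:0, 1:] + [:[:0, of_nat n:]:]) * monom (monom (1::real) e) cy
      + [:[:0, 1, -2:]:] * map_poly pderiv (monom (monom 1 e) cy)
    = monom (monom 1 e) (Suc cy) + monom ([:0, of_nat n:] * monom 1 e + simsun_deriv (monom 1 e)) cy"
    by (simp only: distrib_right add.assoc shift inner)
  also have "\<dots> = monom (monom 1 e) (Suc cy)
      + monom (monom (of_nat e) e + monom (of_nat (n - 2 * e)) (Suc e)) cy"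
    using simsun_step_monom[OF assms, of 0] by simp
  finally show ?thesis by (simp add: of_nat_mult_monom add_monom add.assoc)
qed

lemma S2_Suc:
  "S2 (Suc n) = ([:0, 1:] + [:[:0, of_nat n:]:]) * S2 n
    + [:[:0, 1, -2:]:] * map_poly pderiv (S2 n)"
proof -
  let ?w = "\<lambda>p. monom (monom (1::real) (exc (Suc n) p)) (cyc (Suc n) p)"
  have step: "(\<Sum>c\<in>insert (Suc n) (SS_slots \<pi> n). ?w (insert_after \<pi> c (Suc n)))
      = ([:0, 1:] + [:[:0, of_nat n:]:]) * monom (monom 1 (exc n \<pi>)) (cyc n \<pi>)
        + [:[:0, 1, -2:]:] * map_poly pderiv (monom (monom 1 (exc n \<pi>)) (cyc n \<pi>))"
    if "\<pi> \<in> SS n" for \<pi>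
  proof -
    have \<pi>: "\<pi> permutes {1..n}" using that by (auto simp: SS_def)
    note card = card_SS_slots[OF \<pi> SS_no_double_exc[OF that]]
    have "(\<Sum>c\<in>SS_slots \<pi> n. ?w (insert_after \<pi> c (Suc n)))
        = (\<Sum>c\<in>SS_slots \<pi> n. if \<pi> c \<le> c then monom (monom 1 (Suc (exc n \<pi>))) (cyc n \<pi>)
             else monom (monom 1 (exc n \<pi>)) (cyc n \<pi>))"
      using exc_insert_after[OF \<pi>] cyc_insert_after[OF \<pi>]
      by (intro sum.cong) (auto simp: SS_slots_def)
    also have "\<dots> = of_nat (n - 2 * exc n \<pi>) * monom (monom 1 (Suc (exc n \<pi>))) (cyc n \<pi>)
          + of_nat (exc n \<pi>) * monom (monom 1 (exc n \<pi>)) (cyc n \<pi>)"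
      by (simp only: sum_if_eq_card[OF finite_SS_slots] card(1,2))
    moreover have "?w (insert_after \<pi> (Suc n) (Suc n)) = monom (monom 1 (exc n \<pi>)) (Suc (cyc n \<pi>))"
      using exc_insert_after[OF \<pi>, of "Suc n"] cyc_insert_after[OF \<pi>, of "Suc n"] by simp
    ultimately show ?thesis
      unfolding S2_step_monom[OF card(3)] by (simp add: SS_slots_def add_ac)
  qed
  have "S2 (Suc n) = (\<Sum>\<pi>\<in>SS n. \<Sum>c\<in>insert (Suc n) (SS_slots \<pi> n). ?w (insert_after \<pi> c (Suc n)))"
    unfolding S2_def using sum_bij_betw_Sigma[OF bij_betw_insert_after_SS SS_finite] by simp
  then show ?thesis
    by (simp add: step S2_def sum_distrib_left map_poly_pderiv_sum sum.distrib)
qed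

section \<open>Simsun permutations of the first kind\<close>

fun ddes :: "nat list \<Rightarrow> bool" where
  "ddes (a # b # c # t) = ((a > b \<and> b > c) \<or> ddes (b # c # t))"
| "ddes _ = False"

fun des_list :: "nat list \<Rightarrow> nat" where
  "des_list (a # b # t) = (if a > b then 1 else 0) + des_list (b # t)"
| "des_list _ = 0"

lemma has_double_descent_Cons3:
  "has_double_descent (a # b # c # t) \<longleftrightarrow> a > b \<and> b > c \<or> has_double_descent (b # c # t)"
proof -
  have ex_Suc: "(\<exists>i. P i) \<longleftrightarrow> P 0 \<or> (\<exists>i. P (Suc i))" for P :: "nat \<Rightarrow> bool"
    by (metis not0_implies_Suc)
  show ?thesis unfolding has_double_descent_def by (subst ex_Suc) simp
qed

lemma has_double_descent_iff_ddes: "has_double_descent w \<longleftrightarrow> ddes w"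
proof (induction w rule: ddes.induct)
  case (1 a b c t)
  then show ?case by (simp add: has_double_descent_Cons3)
qed (auto simp: has_double_descent_def)

lemma ddes_append_right: "ddes ys \<Longrightarrow> ddes (xs @ ys)"
proof (induction xs)
  case (Cons x xs)
  then have "ddes (xs @ ys)" by simp
  then show ?case by (cases "xs @ ys" rule: ddes.cases) auto
qed simp

lemma ddes_insert_max:
  assumes "\<forall>v\<in>set (xs @ ys). v < N" "\<not> ddes (xs @ ys)"
  shows "ddes (xs @ N # ys) \<longleftrightarrow> (\<exists>a b t. ys = a # b # t \<and> a > b)"
  using assms
proof (induction xs)
  case Nil
  then show ?case by (cases ys rule: ddes.cases) auto
next
  case (Cons x xs)
  have nd: "\<not> ddes (xs @ ys)" using Cons.prems(2) ddes_append_right[of "xs @ ys" "[x]"] by auto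
  have IH: "ddes (xs @ N # ys) \<longleftrightarrow> (\<exists>a b t. ys = a # b # t \<and> a > b)" using Cons nd by simp
  have "ddes (x # xs @ N # ys) \<longleftrightarrow> ddes (xs @ N # ys)"
  proof (cases xs)
    case Nil then show ?thesis using Cons.prems(1) by (cases ys) auto
  next
    case (Cons y zs)
    show ?thesis
    proof (cases zs)
      case Nil then show ?thesis using Cons \<open>xs = y # zs\<close> Cons.prems(1) by simp
    next
      case (Cons z us)
      have "\<not> (x > y \<and> y > z)"
      proof
        assume "x > y \<and> y > z"
        then have "ddes (x # y # z # (us @ ys))" by simp
        then show False using \<open>xs = y # zs\<close> Cons \<open>\<not> ddes ((x # xs) @ ys)\<close> by simp
      qed
      then show ?thesis using \<open>xs = y # zs\<close> Cons by auto
    qed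
  qed
  then show ?case using IH by simp
qed

lemma des_list_append_Cons: "des_list (xs @ y # ys) = des_list (xs @ [y]) + des_list (y # ys)"
proof (induction xs rule: des_list.induct)
  case (1 a b t)
  then show ?case by simp
next
  case ("2_1") then show ?case by simp
next
  case ("2_2" a) then show ?case by (cases ys) auto
qed

lemma des_list_snoc_max: "\<forall>v\<in>set xs. v < N \<Longrightarrow> des_list (xs @ [N]) = des_list xs"
  by (induction xs rule: des_list.induct) auto

lemma des_list_append: "xs \<noteq> [] \<Longrightarrow> ys \<noteq> [] \<Longrightarrow>
  des_list (xs @ ys) = des_list xs + (if last xs > hd ys then 1 else 0) + des_list ys"
proof (induction xs rule: des_list.induct)
  case (1 a b t)
  then show ?case by simp
next
  case ("2_1") then show ?case by simp
next
  case ("2_2" a) then show ?case by (cases ys) auto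
qed

lemma des_list_insert_max:
  assumes "\<forall>v\<in>set (xs @ ys). v < N"
  shows "des_list (xs @ N # ys) = des_list (xs @ ys) + (if ys \<noteq> [] \<and> (xs = [] \<or> \<not> last xs > hd ys) then 1 else 0)"
proof -
  have A: "\<forall>v\<in>set xs. v < N" "\<forall>v\<in>set ys. v < N" using assms by auto
  have s: "des_list (xs @ N # ys) = des_list xs + des_list (N # ys)"
    using des_list_append_Cons[of xs N ys] des_list_snoc_max[OF A(1)] by simp
  show ?thesis
  proof (cases ys)
    case Nil then show ?thesis using s by simp
  next
    case (Cons b t)
    have "des_list (N # ys) = 1 + des_list ys" using Cons A(2) by simp
    moreover have "des_list (xs @ ys) = des_list xs + (if xs \<noteq> [] \<and> last xs > hd ys then 1 else 0) + des_list ys"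
      using des_list_append[of xs ys] Cons by (cases "xs = []") auto
    ultimately show ?thesis using s Cons by auto
  qed
qed

lemma des_list_eq_card: "des_list w = card {i. Suc i < length w \<and> w ! i > w ! Suc i}"
proof (induction w rule: des_list.induct)
  case (1 a b t)
  have e: "{i. Suc i < length (a # b # t) \<and> (a # b # t) ! i > (a # b # t) ! Suc i}
    = (if a > b then {0} else {}) \<union> Suc ` {i. Suc i < length (b # t) \<and> (b # t) ! i > (b # t) ! Suc i}"
  proof (rule set_eqI)
    fix i show "i \<in> {i. Suc i < length (a # b # t) \<and> (a # b # t) ! i > (a # b # t) ! Suc i} \<longleftrightarrow>
      i \<in> (if a > b then {0} else {}) \<union> Suc ` {i. Suc i < length (b # t) \<and> (b # t) ! i > (b # t) ! Suc i}"
      by (cases i) auto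
  qed
  have fin: "finite {i. Suc i < length (b # t) \<and> (b # t) ! i > (b # t) ! Suc i}" by simp
  have "card (Suc ` {i. Suc i < length (b # t) \<and> (b # t) ! i > (b # t) ! Suc i})
    = card {i. Suc i < length (b # t) \<and> (b # t) ! i > (b # t) ! Suc i}" by (simp add: card_image)
  then show ?case using 1 fin unfolding e by (auto simp: card_insert_if)
qed auto

definition simsun_word :: "nat \<Rightarrow> nat list \<Rightarrow> bool" where
  "simsun_word n w \<longleftrightarrow> (\<forall>k\<in>{1..n}. \<not> ddes (filter (\<lambda>v. v \<le> k) w))"

definition RS_words :: "nat \<Rightarrow> nat list set" where
  "RS_words n = {w\<in>permutations_of_set {1..n}. simsun_word n w}"

lemma nth_oneline: "i < n \<Longrightarrow> oneline n p ! i = p (Suc i)"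
  by (simp add: oneline_def del: upt_Suc)

lemma length_oneline[simp]: "length (oneline n p) = n"
  by (simp add: oneline_def)

lemma oneline_inj: "inj_on (oneline n) {p. p permutes {1..n}}"
proof (rule inj_onI)
  fix p q assume p: "p \<in> {p. p permutes {1..n}}" and q: "q \<in> {p. p permutes {1..n}}"
    and e: "oneline n p = oneline n q"
  show "p = q"
  proof
    fix x
    show "p x = q x"
    proof (cases "x \<in> {1..n}")
      case True
      then obtain i where "x = Suc i" "i < n" by (cases x) auto
      then show ?thesis using e nth_oneline[of i n p] nth_oneline[of i n q] by metis
    next
      case False
      then show ?thesis using p q by (simp add: permutes_not_in)
    qed
  qed
qed

lemma oneline_image: "oneline n ` {p. p permutes {1..n}} = permutations_of_set {1..n}"
proof (rule card_subset_eq)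
  show "finite (permutations_of_set {1..n})" by simp
  show "oneline n ` {p. p permutes {1..n}} \<subseteq> permutations_of_set {1..n}"
  proof
    fix w assume "w \<in> oneline n ` {p. p permutes {1..n}}"
    then obtain p where p: "p permutes {1..n}" "w = oneline n p" by blast
    have "set w = p ` {1..n}" using p by (simp add: oneline_def atLeastLessThanSuc_atLeastAtMost del: upt_Suc)
    also have "\<dots> = {1..n}" using permutes_image[OF p(1)] .
    finally have "set w = {1..n}" .
    moreover have "distinct w" using p permutes_inj_on[OF p(1)]
      by (simp add: oneline_def distinct_map atLeastLessThanSuc_atLeastAtMost del: upt_Suc)
    ultimately show "w \<in> permutations_of_set {1..n}" by (rule permutations_of_setI)
  qed
  show "card (oneline n ` {p. p permutes {1..n}}) = card (permutations_of_set {1..n})"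
    unfolding card_image[OF oneline_inj] using card_permutations[of "{1..n}" n] by simp
qed

lemma des_eq_des_list_oneline:
  assumes "p permutes {1..n}"
  shows "des n p = des_list (oneline n p)"
proof -
  have "{i\<in>{1..n-1}. p i > p (i+1)} = Suc ` {i. Suc i < length (oneline n p) \<and> oneline n p ! i > oneline n p ! Suc i}"
  proof (rule set_eqI)
    fix x
    show "x \<in> {i\<in>{1..n-1}. p i > p (i+1)} \<longleftrightarrow> x \<in> Suc ` {i. Suc i < length (oneline n p) \<and> oneline n p ! i > oneline n p ! Suc i}"
    proof
      assume "x \<in> {i\<in>{1..n-1}. p i > p (i+1)}"
      then obtain i where "x = Suc i" "Suc i < n" "p (Suc i) > p (Suc (Suc i))" by (cases x) auto
      then show "x \<in> Suc ` {i. Suc i < length (oneline n p) \<and> oneline n p ! i > oneline n p ! Suc i}"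
        by (auto simp: nth_oneline)
    next
      assume "x \<in> Suc ` {i. Suc i < length (oneline n p) \<and> oneline n p ! i > oneline n p ! Suc i}"
      then obtain i where "x = Suc i" "Suc i < n" "oneline n p ! i > oneline n p ! Suc i" by auto
      then show "x \<in> {i\<in>{1..n-1}. p i > p (i+1)}" by (auto simp: nth_oneline)
    qed
  qed
  then show ?thesis unfolding des_def des_list_eq_card by (simp add: card_image)
qed

lemma S1_eq_sum_RS_words: "S1 n = (\<Sum>w\<in>RS_words n. monom 1 (des_list w))"
proof -
  have RS: "RS n = {p. p permutes {1..n} \<and> simsun_word n (oneline n p)}"
    by (simp add: RS_def simsun_word_def has_double_descent_iff_ddes)
  have img: "oneline n ` RS n = RS_words n"
  proof
    show "oneline n ` RS n \<subseteq> RS_words n" using oneline_image unfolding RS RS_words_def by blast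
    show "RS_words n \<subseteq> oneline n ` RS n"
    proof
      fix w assume "w \<in> RS_words n"
      then have w: "w \<in> permutations_of_set {1..n}" "simsun_word n w" by (auto simp: RS_words_def)
      then obtain p where "p permutes {1..n}" "w = oneline n p" using oneline_image by blast
      then show "w \<in> oneline n ` RS n" using w unfolding RS by blast
    qed
  qed
  have inj: "inj_on (oneline n) (RS n)" by (rule inj_on_subset[OF oneline_inj]) (auto simp: RS_def)
  have "S1 n = (\<Sum>p\<in>RS n. monom 1 (des_list (oneline n p)))"
    unfolding S1_def by (rule sum.cong[OF refl]) (simp add: des_eq_des_list_oneline RS_def)
  also have "\<dots> = (\<Sum>w\<in>oneline n ` RS n. monom 1 (des_list w))"
    by (rule sum.reindex[OF inj, symmetric, unfolded comp_def])
  finally show ?thesis unfolding img .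
qed

definition insert_at :: "nat list \<Rightarrow> nat \<Rightarrow> nat \<Rightarrow> nat list" where
  "insert_at w j N = take j w @ N # drop j w"

definition RS_slots :: "nat \<Rightarrow> nat list \<Rightarrow> nat set" where
  "RS_slots n w = {j. j \<le> n \<and> \<not> (Suc j < n \<and> w ! j > w ! Suc j)}"

lemma finite_RS_slots [simp]: "finite (RS_slots n w)"
  by (simp add: RS_slots_def)

lemma length_permutations_of_set: "w \<in> permutations_of_set {1..n} \<Longrightarrow> length w = n"
  using length_finite_permutations_of_set by fastforce

lemma filter_le_insert_at: "k < N \<Longrightarrow> filter (\<lambda>v. v \<le> k) (insert_at w j N) = filter (\<lambda>v. v \<le> k) w"
proof -
  assume "k < N"
  then have "filter (\<lambda>v. v \<le> k) (insert_at w j N) = filter (\<lambda>v. v \<le> k) (take j w) @ filter (\<lambda>v. v \<le> k) (drop j w)"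
    by (simp add: insert_at_def)
  then show ?thesis by (metis append_take_drop_id filter_append)
qed

lemma simsun_word_not_ddes:
  assumes "w \<in> permutations_of_set {1..n}" "simsun_word n w"
  shows "\<not> ddes w"
proof (cases "n = 0")
  case True then show ?thesis using length_permutations_of_set[OF assms(1)] by simp
next
  case False
  then have "\<not> ddes (filter (\<lambda>v. v \<le> n) w)" using assms(2) by (auto simp: simsun_word_def)
  moreover have "filter (\<lambda>v. v \<le> n) w = w"
    using permutations_of_setD(1)[OF assms(1)] by (auto intro: filter_True)
  ultimately show ?thesis by simp
qed

lemma simsun_word_insert_at_iff:
  assumes w: "w \<in> permutations_of_set {1..n}"
  shows "simsun_word (Suc n) (insert_at w j (Suc n)) \<longleftrightarrow> simsun_word n w \<and> \<not> ddes (insert_at w j (Suc n))"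
proof -
  have sw: "set w = {1..n}" using permutations_of_setD(1)[OF w] .
  have top: "filter (\<lambda>v. v \<le> Suc n) (insert_at w j (Suc n)) = insert_at w j (Suc n)"
  proof (rule filter_True)
    show "\<forall>x\<in>set (insert_at w j (Suc n)). x \<le> Suc n"
      using sw set_take_subset[of j w] set_drop_subset[of j w] by (auto simp: insert_at_def)
  qed
  have low: "filter (\<lambda>v. v \<le> k) (insert_at w j (Suc n)) = filter (\<lambda>v. v \<le> k) w" if "k \<le> n" for k
    using that by (intro filter_le_insert_at) simp
  have "simsun_word (Suc n) (insert_at w j (Suc n)) \<longleftrightarrow>
      (\<forall>k\<in>{1..n}. \<not> ddes (filter (\<lambda>v. v \<le> k) (insert_at w j (Suc n)))) \<and> \<not> ddes (filter (\<lambda>v. v \<le> Suc n) (insert_at w j (Suc n)))"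
    unfolding simsun_word_def by (auto simp: atLeastAtMostSuc_conv)
  also have "\<dots> \<longleftrightarrow> simsun_word n w \<and> \<not> ddes (insert_at w j (Suc n))"
    unfolding top simsun_word_def using low by auto
  finally show ?thesis .
qed

lemma ddes_insert_at_iff:
  assumes w: "w \<in> permutations_of_set {1..n}" and nd: "\<not> ddes w"
  shows "ddes (insert_at w j (Suc n)) \<longleftrightarrow> (Suc j < n \<and> w ! j > w ! Suc j)"
proof -
  have sw: "set w = {1..n}" using permutations_of_setD(1)[OF w] .
  have len: "length w = n" using length_permutations_of_set[OF w] .
  have lt: "\<forall>v\<in>set (take j w @ drop j w). v < Suc n" using sw by auto
  have "ddes (insert_at w j (Suc n)) \<longleftrightarrow> (\<exists>a b t. drop j w = a # b # t \<and> a > b)"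
    unfolding insert_at_def by (rule ddes_insert_max[OF lt]) (use nd in simp)
  also have "\<dots> \<longleftrightarrow> (Suc j < n \<and> w ! j > w ! Suc j)"
  proof (cases "Suc j < n")
    case True
    then have "drop j w = w ! j # w ! Suc j # drop (Suc (Suc j)) w"
      using len by (simp add: Cons_nth_drop_Suc)
    then show ?thesis using True by auto
  next
    case False
    then have l1: "length (drop j w) \<le> 1" using len by simp
    have "\<not>(\<exists>a b t. drop j w = a # b # t)"
    proof clarify
      fix a b t assume "drop j w = a # b # t"
      then have "length (drop j w) = Suc (Suc (length t))" by simp
      then show False using l1 by simp
    qed
    then show ?thesis using False by auto
  qed
  finally show ?thesis .
qed

lemma insert_at_permutations_of_set:
  assumes w: "w \<in> permutations_of_set {1..n}" and j: "j \<le> n"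
  shows "insert_at w j (Suc n) \<in> permutations_of_set {1..Suc n}"
proof
  have sw: "set w = {1..n}" "distinct w" using permutations_of_setD[OF w] by auto
  have td: "set (take j w) \<union> set (drop j w) = set w" by (metis append_take_drop_id set_append)
  have "set (insert_at w j (Suc n)) = insert (Suc n) (set w)"
    using td by (auto simp: insert_at_def)
  then show "set (insert_at w j (Suc n)) = {1..Suc n}" using sw by (auto simp: atLeastAtMostSuc_conv)
  have d1: "distinct (take j w)" "distinct (drop j w)" "set (take j w) \<inter> set (drop j w) = {}"
    using sw(2) by (metis append_take_drop_id distinct_append)+
  have nw: "Suc n \<notin> set w" using sw by simp
  have "Suc n \<notin> set (take j w)" "Suc n \<notin> set (drop j w)" using nw td by blast+
  then show "distinct (insert_at w j (Suc n))" using d1 by (auto simp: insert_at_def)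
qed

lemma insert_at_mem_RS_words:
  assumes w: "w \<in> RS_words n" and j: "j \<in> RS_slots n w"
  shows "insert_at w j (Suc n) \<in> RS_words (Suc n)"
proof -
  have w1: "w \<in> permutations_of_set {1..n}" "simsun_word n w" using w by (auto simp: RS_words_def)
  have jn: "j \<le> n" using j by (auto simp: RS_slots_def)
  have "\<not> ddes (insert_at w j (Suc n))"
    using ddes_insert_at_iff[OF w1(1) simsun_word_not_ddes[OF w1]] j by (auto simp: RS_slots_def)
  then show ?thesis
    using simsun_word_insert_at_iff[OF w1(1)] w1 insert_at_permutations_of_set[OF w1(1) jn]
    by (simp add: RS_words_def)
qed

lemma RS_words_Suc_subset_image:
  assumes w': "w' \<in> RS_words (Suc n)"
  shows "w' \<in> (\<lambda>(w, j). insert_at w j (Suc n)) ` (SIGMA w:RS_words n. RS_slots n w)"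
proof -
  have w'1: "w' \<in> permutations_of_set {1..Suc n}" "simsun_word (Suc n) w'"
    using w' by (auto simp: RS_words_def)
  have s: "set w' = {1..Suc n}" "distinct w'" using permutations_of_setD[OF w'1(1)] by auto
  then obtain xs ys where xy: "w' = xs @ Suc n # ys" by (metis atLeastAtMost_iff le_refl
        le_add1 plus_1_eq_Suc split_list)
  define w where "w = xs @ ys"
  define j where "j = length xs"
  have "set w = insert (Suc n) (set w) - {Suc n}" using s(2) xy by (auto simp: w_def)
  also have "\<dots> = {1..Suc n} - {Suc n}" using s(1) xy by (auto simp: w_def)
  also have "\<dots> = {1..n}" by auto
  finally have "set w = {1..n}" .
  moreover have "distinct w" using s(2) xy by (simp add: w_def)
  ultimately have wP: "w \<in> permutations_of_set {1..n}" by (rule permutations_of_setI)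
  have ie: "insert_at w j (Suc n) = w'" by (simp add: insert_at_def w_def j_def xy)
  have jn: "j \<le> n" using length_permutations_of_set[OF wP] by (simp add: w_def j_def)
  have ss: "simsun_word n w" "\<not> ddes w'"
    using simsun_word_insert_at_iff[OF wP, of j] ie w'1(2) by simp_all
  then have "\<not> (Suc j < n \<and> w ! j > w ! Suc j)"
    using ddes_insert_at_iff[OF wP simsun_word_not_ddes[OF wP ss(1)], of j] ie by simp
  then have "j \<in> RS_slots n w" using jn by (simp add: RS_slots_def)
  moreover have "w \<in> RS_words n" using wP ss by (simp add: RS_words_def)
  ultimately show ?thesis using ie by (auto intro!: image_eqI[of _ _ "(w, j)"])
qed

text \<open>The position and the remaining word are recovered from \<open>insert_at w j (Suc n)\<close> as the
  prefix before \<open>Suc n\<close> and by deleting \<open>Suc n\<close>.\<close>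
lemma inj_on_insert_at:
  "inj_on (\<lambda>(w, j). insert_at w j (Suc n)) (SIGMA w:RS_words n. RS_slots n w)"
proof (rule inj_onI, clarify)
  fix w j w' j'
  assume a: "w \<in> RS_words n" "j \<in> RS_slots n w" "w' \<in> RS_words n" "j' \<in> RS_slots n w'"
    and e: "insert_at w j (Suc n) = insert_at w' j' (Suc n)"
  have sw: "set w = {1..n}" "set w' = {1..n}"
    using a by (auto simp: RS_words_def permutations_of_set_def)
  have len: "length w = n" "length w' = n"
    using a length_permutations_of_set by (auto simp: RS_words_def)
  have jn: "j \<le> n" "j' \<le> n" using a by (auto simp: RS_slots_def)
  have tw: "takeWhile (\<lambda>x. x \<noteq> Suc n) (insert_at v i (Suc n)) = take i v" if "set v = {1..n}" for v i
  proof -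
    have "\<forall>x\<in>set (take i v). x \<noteq> Suc n" using that set_take_subset[of i v] by auto
    then show ?thesis by (simp add: insert_at_def takeWhile_append2)
  qed
  have "take j w = take j' w'" using tw[OF sw(1), of j] tw[OF sw(2), of j'] e by simp
  then have jj: "j = j'" using len jn by (metis length_take min.absorb2)
  have rm: "filter (\<lambda>x. x \<noteq> Suc n) (insert_at v i (Suc n)) = v" if "set v = {1..n}" for v i
  proof -
    have "filter (\<lambda>x. x \<noteq> Suc n) (insert_at v i (Suc n))
        = filter (\<lambda>x. x \<noteq> Suc n) (take i v) @ filter (\<lambda>x. x \<noteq> Suc n) (drop i v)"
      by (simp add: insert_at_def)
    also have "\<dots> = filter (\<lambda>x. x \<noteq> Suc n) (take i v @ drop i v)" by (simp only: filter_append)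
    also have "\<dots> = v" using that by (auto intro: filter_True)
    finally show ?thesis .
  qed
  have "w = w'" using rm[OF sw(1), of j] rm[OF sw(2), of j'] e by simp
  then show "w = w' \<and> j = j'" using jj by simp
qed

lemma bij_betw_insert_at_RS_words:
  "bij_betw (\<lambda>(w, j). insert_at w j (Suc n)) (SIGMA w:RS_words n. RS_slots n w) (RS_words (Suc n))"
  using inj_on_insert_at RS_words_Suc_subset_image insert_at_mem_RS_words
  by (intro bij_betw_imageI) fastforce+

lemma des_list_insert_at:
  assumes w: "w \<in> permutations_of_set {1..n}" and j: "j \<le> n"
  shows "des_list (insert_at w j (Suc n)) = des_list w + (if j < n \<and> (j = 0 \<or> \<not> w ! (j - 1) > w ! j) then 1 else 0)"
proof -
  have sw: "set w = {1..n}" using permutations_of_setD(1)[OF w] .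
  have len: "length w = n" using length_permutations_of_set[OF w] .
  have lt: "\<forall>v\<in>set (take j w @ drop j w). v < Suc n" using sw by auto
  have e: "des_list (insert_at w j (Suc n)) = des_list w + (if drop j w \<noteq> [] \<and> (take j w = [] \<or> \<not> last (take j w) > hd (drop j w)) then 1 else 0)"
    unfolding insert_at_def using des_list_insert_max[OF lt] by simp
  have c1: "drop j w \<noteq> [] \<longleftrightarrow> j < n" using len by auto
  have c2: "take j w = [] \<longleftrightarrow> j = 0" using len j by auto
  have c3: "last (take j w) = w ! (j - 1)" if "0 < j" using that j len
  proof -
    have "take j w = take (j - 1) w @ [w ! (j - 1)]"
      using that j len take_Suc_conv_app_nth[of "j - 1" w] by simp
    then show ?thesis by (metis last_snoc)
  qed
  have c4: "hd (drop j w) = w ! j" if "j < n" using that len by (simp add: hd_drop_conv_nth)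
  show ?thesis unfolding e using c1 c2 c3 c4 by auto
qed

text \<open>Inserting \<open>n + 1\<close> at an admissible position \<open>j\<close> creates no new descent exactly when
  \<open>j = n\<close> or \<open>j\<close> directly follows a descent; the latter positions are all admissible because
  \<open>w\<close> has no double descent.\<close>
lemma RS_slots_no_new_descent:
  assumes len: "length w = n" and nd: "\<not> has_double_descent w"
  shows "{j\<in>RS_slots n w. \<not> (j < n \<and> (j = 0 \<or> \<not> w ! (j - 1) > w ! j))}
    = insert n (Suc ` {i. Suc i < n \<and> w ! i > w ! Suc i})"
proof (rule set_eqI, rule iffI)
  fix j assume j: "j \<in> {j\<in>RS_slots n w. \<not> (j < n \<and> (j = 0 \<or> \<not> w ! (j - 1) > w ! j))}"
  show "j \<in> insert n (Suc ` {i. Suc i < n \<and> w ! i > w ! Suc i})"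
  proof (cases "j = n")
    case False
    then have "j < n" "j \<noteq> 0" "w ! (j - 1) > w ! j" using j by (auto simp: RS_slots_def)
    then obtain i where "j = Suc i" "Suc i < n" "w ! i > w ! Suc i" by (cases j) auto
    then show ?thesis by auto
  qed simp
next
  fix j assume "j \<in> insert n (Suc ` {i. Suc i < n \<and> w ! i > w ! Suc i})"
  then consider "j = n" | i where "j = Suc i" "Suc i < n" "w ! i > w ! Suc i" by auto
  then show "j \<in> {j\<in>RS_slots n w. \<not> (j < n \<and> (j = 0 \<or> \<not> w ! (j - 1) > w ! j))}"
  proof cases
    case (2 i)
    have "\<not> (Suc (Suc i) < n \<and> w ! Suc i > w ! Suc (Suc i))"
      using 2 nd len unfolding has_double_descent_def by (metis add_2_eq_Suc' Suc_eq_plus1)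
    then show ?thesis using 2 by (auto simp: RS_slots_def)
  qed (simp add: RS_slots_def)
qed

lemma card_RS_slots:
  assumes w: "w \<in> RS_words n"
  defines "P \<equiv> \<lambda>j. j < n \<and> (j = 0 \<or> \<not> w ! (j - 1) > w ! j)"
  shows "card {j\<in>RS_slots n w. \<not> P j} = des_list w + 1"
    and "card {j\<in>RS_slots n w. P j} = n - 2 * des_list w"
    and "2 * des_list w \<le> n"
proof -
  have wP: "w \<in> permutations_of_set {1..n}" and ss: "simsun_word n w"
    using w by (auto simp: RS_words_def)
  have len: "length w = n" using length_permutations_of_set[OF wP] .
  have nd: "\<not> has_double_descent w"
    using simsun_word_not_ddes[OF wP ss] has_double_descent_iff_ddes by simp
  define D where "D = {i. Suc i < n \<and> w ! i > w ! Suc i}"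
  have d: "des_list w = card D" unfolding D_def des_list_eq_card len ..
  have finD: "finite D" unfolding D_def by (rule finite_subset[of _ "{..<n}"]) auto
  have "RS_slots n w = {..n} - D" by (auto simp: RS_slots_def D_def)
  moreover have "D \<subseteq> {..n}" by (auto simp: D_def)
  ultimately have cA: "card (RS_slots n w) = Suc n - des_list w"
    using d by (simp add: card_Diff_subset[OF finD])
  have "n \<notin> Suc ` D" by (auto simp: D_def)
  then have cZ: "card {j\<in>RS_slots n w. \<not> P j} = Suc (card D)"
    unfolding P_def RS_slots_no_new_descent[OF len nd, folded D_def] using finD
    by (simp add: card_image)
  then show "card {j\<in>RS_slots n w. \<not> P j} = des_list w + 1" using d by simp
  have "card {j\<in>RS_slots n w. P j} + card {j\<in>RS_slots n w. \<not> P j} = card (RS_slots n w)"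
    by (rule card_filter_add_card_filter_not) simp
  then show "card {j\<in>RS_slots n w. P j} = n - 2 * des_list w" "2 * des_list w \<le> n"
    using cA cZ d by auto
qed

lemma finite_RS_words: "finite (RS_words n)"
  by (rule finite_subset[of _ "permutations_of_set {1..n}"]) (auto simp: RS_words_def)

lemma S1_Suc: "S1 (Suc n) = [:1, of_nat n:] * S1 n + simsun_deriv (S1 n)"
proof -
  have step: "(\<Sum>j\<in>RS_slots n w. monom 1 (des_list (insert_at w j (Suc n))))
      = [:1, of_nat n:] * monom 1 (des_list w) + simsun_deriv (monom 1 (des_list w))"
    if w: "w \<in> RS_words n" for w
  proof -
    define P where "P = (\<lambda>j. j < n \<and> (j = 0 \<or> \<not> w ! (j - 1) > w ! j))"
    have card: "card {j\<in>RS_slots n w. \<not> P j} = des_list w + 1"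
      "card {j\<in>RS_slots n w. P j} = n - 2 * des_list w" "2 * des_list w \<le> n"
      using card_RS_slots[OF w] unfolding P_def by simp_all
    have wP: "w \<in> permutations_of_set {1..n}" using w by (simp add: RS_words_def)
    have "(\<Sum>j\<in>RS_slots n w. monom (1::real) (des_list (insert_at w j (Suc n))))
        = (\<Sum>j\<in>RS_slots n w. if P j then monom 1 (Suc (des_list w)) else monom 1 (des_list w))"
      using des_list_insert_at[OF wP] by (intro sum.cong) (auto simp: RS_slots_def P_def)
    also have "\<dots> = of_nat (n - 2 * des_list w) * monom 1 (Suc (des_list w))
        + of_nat (des_list w + 1) * monom 1 (des_list w)"
      by (simp only: sum_if_eq_card[OF finite_RS_slots] card(1,2))
    also have "\<dots> = monom (1 + of_nat (des_list w)) (des_list w)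
        + monom (of_nat (n - 2 * des_list w)) (Suc (des_list w))"
      by (simp only: of_nat_mult_monom mult_1_right) (simp add: add.commute)
    also have "\<dots> = [:1, of_nat n:] * monom 1 (des_list w) + simsun_deriv (monom 1 (des_list w))"
      by (rule simsun_step_monom[OF card(3), symmetric])
    finally show ?thesis .
  qed
  have "S1 (Suc n) = (\<Sum>w\<in>RS_words n. \<Sum>j\<in>RS_slots n w. monom 1 (des_list (insert_at w j (Suc n))))"
    unfolding S1_eq_sum_RS_words
    using sum_bij_betw_Sigma[OF bij_betw_insert_at_RS_words finite_RS_words] by simp
  then show ?thesis
    by (simp add: step S1_eq_sum_RS_words sum_distrib_left simsun_deriv_sum sum.distrib)
qed

section \<open>The exponential generating function\<close>

lemma S1_0: "S1 0 = 1"
proof -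
  have "RS 0 = {id}" by (auto simp: RS_def oneline_def has_double_descent_def)
  then show ?thesis by (simp add: S1_def des_def)
qed

lemma S2_0: "S2 0 = 1"
proof -
  have "SS 0 = {id}" by (auto simp: SS_def simsun2_def no_double_exc_def)
  then show ?thesis by (simp add: S2_def exc_def cyc_def)
qed

lemma poly_map_poly_pderiv: "poly (map_poly pderiv P) [:c:] = pderiv (poly P [:c:])"
  by (induction P rule: pCons_induct)
     (simp_all add: map_poly_pCons pderiv_add pderiv_mult pderiv_pCons pderiv_smult)

lemma poly_poly_const: "poly (poly P [:q:]) x = poly (map_poly (\<lambda>c. poly c x) P) (q::real)"
  by (induction P rule: pCons_induct) (simp_all add: map_poly_pCons)

lemma simsun_rec_S2: "simsun_rec c (\<lambda>n. poly (S2 n) [:c:])"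
  unfolding simsun_rec_def S2_Suc by (simp add: poly_map_poly_pderiv simsun_deriv_def)

lemma S2_egf:
  "Abs_fps (\<lambda>n. poly (poly (S2 n) [:q:]) x / fact n) = fps_pow_real (S_egf x) q"
proof (rule fps_pow_real_unique[where G = "\<lambda>q. Abs_fps (\<lambda>n. poly (poly (S2 n) [:q:]) x / fact n)"])
  show "S_egf x $ 0 = 1" by (simp add: S_egf_def S1_0)
  show "\<exists>P. \<forall>q. Abs_fps (\<lambda>n. poly (poly (S2 n) [:q:]) x / fact n) $ n = poly P q" for n
    by (intro exI[of _ "smult (1 / fact n) (map_poly (\<lambda>c. poly c x) (S2 n))"])
       (simp add: poly_poly_const)
  have "simsun_rec 1 S1" by (simp add: simsun_rec_def S1_Suc)
  then have "egf_at x (\<lambda>n. poly (S2 n) [:of_nat m:]) = egf_at x S1 ^ m" for m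
    by (intro egf_at_simsun_rec_power[where V = "\<lambda>m n. poly (S2 n) [:of_nat m:]"])
       (simp_all add: S1_0 S2_0 simsun_rec_S2)
  then show "Abs_fps (\<lambda>n. poly (poly (S2 n) [:of_nat m:]) x / fact n) = S_egf x ^ m" for m
    by (simp add: egf_at_def S_egf_def)
qed

theorem theorem13:
  shows "S2 0 = 1
    \<and> (\<forall>n. S2 (Suc n) = ([:0, 1:] + [:[:0, of_nat n:]:]) * S2 n
                         + [:[:0, 1, -2:]:] * map_poly pderiv (S2 n))
    \<and> (\<forall>(x::real) (q::real).
         Abs_fps (\<lambda>n. poly (poly (S2 n) [:q:]) x / fact n) = fps_pow_real (S_egf x) q)"
  using S2_0 S2_Suc S2_egf by blast

end
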